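(* Let $k\ge 3$, let $s_1,\dots,s_{k-1}$ be reals, and let $n=k$. If $x=(x_1,\dots,x_k)\in S_k$ is a local maximum of $x\mapsto\sum_{i=1}^k x_i^k$ on $S_k$, then there exists an integer $i$ with $1\le 2i<2i+1\le k$ and $x_{2i}=x_{2i+1}$. If $x\in S_k$ is a local minimum of this function on $S_k$, then there exists an integer $i$ with $1\le 2i-1<2i\le k$ and $x_{2i-1}=x_{2i}$.
   Context: For integers $k\ge 3$, $n\ge k$ and reals $s_1,\dots,s_{k-1}$, $S_k:=\{(x_1,\dots,x_n)\in\mathbb{R}^n : x_1\ge x_2\ge\cdots\ge x_n,\ \sum_{i=1}^n x_i^j=s_j\text{ for }j=1,\dots,k-1\}$ with the subspace topology from $\mathbb{R}^n$. *)

theory Defs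
  imports "HOL-Analysis.Analysis"
begin

text \<open>Points of R^n are represented as functions x :: nat => real, of which only the
  coordinates x 1, ..., x n matter (1-based indexing as in the paper).\<close>

definition Sk :: "nat \<Rightarrow> nat \<Rightarrow> (nat \<Rightarrow> real) \<Rightarrow> (nat \<Rightarrow> real) set" where
  "Sk k n s = {x. (\<forall>i\<in>{1..<n}. x (Suc i) \<le> x i) \<and>
                  (\<forall>j\<in>{1..k-1}. (\<Sum>i=1..n. x i ^ j) = s j)}"

definition distn :: "nat \<Rightarrow> (nat \<Rightarrow> real) \<Rightarrow> (nat \<Rightarrow> real) \<Rightarrow> real" where
  "distn n x y = sqrt (\<Sum>i=1..n. (x i - y i)^2)"

definition local_max_on :: "nat \<Rightarrow> (nat \<Rightarrow> real) set \<Rightarrow> ((nat \<Rightarrow> real) \<Rightarrow> real) \<Rightarrow> (nat \<Rightarrow> real) \<Rightarrow> bool" where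
  "local_max_on n S f x \<longleftrightarrow> x \<in> S \<and> (\<exists>e>0. \<forall>y\<in>S. distn n y x < e \<longrightarrow> f y \<le> f x)"

definition local_min_on :: "nat \<Rightarrow> (nat \<Rightarrow> real) set \<Rightarrow> ((nat \<Rightarrow> real) \<Rightarrow> real) \<Rightarrow> (nat \<Rightarrow> real) \<Rightarrow> bool" where
  "local_min_on n S f x \<longleftrightarrow> x \<in> S \<and> (\<exists>e>0. \<forall>y\<in>S. distn n y x < e \<longrightarrow> f x \<le> f y)"

end

theory Submission
  imports Defs "HOL-Computational_Algebra.Polynomial"
begin

(* Let x be a point of S_k (n = k) and P(t) = (t - x_1)...(t - x_k).
   For a small constant c of suitable sign, P + c again has k real roots
   y_1 > ... > y_k, each close to the corresponding x_l.  Since P + c and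
   (t - y_1)...(t - y_k) are monic of degree k with the same roots, they are equal,
   and Newton's identities then give: the power sums of y of degree j < k agree
   with those of x (so y lies in S_k), while the k-th power sum drops by k * c.
   The admissible sign of c is dictated by the ties of x: near a double root
   x_l = x_(l+1) the polynomial P has the sign (-1)^(l+1), so P + c has two real
   roots there only if (-1)^l * c > 0.  Hence if x has no tie at an
   even position we may take c < 0 and increase the k-th power sum, and if it has
   no tie at an odd position we may take c > 0 and decrease it. *)

section \<open>Power sums of the roots of a shifted monic polynomial\<close>

definition root_poly :: "nat set \<Rightarrow> (nat \<Rightarrow> real) \<Rightarrow> real poly" where
  "root_poly I z = (\<Prod>i\<in>I. [:-z i, 1:])"

text \<open>The quotient (X^j - a^j) / (X - a) = sum of a^(j-1-m) X^m.\<close>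
definition geom_quot :: "real \<Rightarrow> nat \<Rightarrow> real poly" where
  "geom_quot a j = (\<Sum>m<j. monom (a ^ (j - Suc m)) m)"

text \<open>Quotient and remainder of X^j * root_poly' on division by root_poly
  (see monom_pderiv_division); the quotient carries the power sums of z.\<close>
definition newton_quot :: "nat set \<Rightarrow> (nat \<Rightarrow> real) \<Rightarrow> nat \<Rightarrow> real poly" where
  "newton_quot I z j = (\<Sum>i\<in>I. geom_quot (z i) j)"

definition newton_rem :: "nat set \<Rightarrow> (nat \<Rightarrow> real) \<Rightarrow> nat \<Rightarrow> real poly" where
  "newton_rem I z j = (\<Sum>i\<in>I. smult (z i ^ j) (\<Prod>l\<in>I-{i}. [:-z l, 1:]))"

lemma poly_root_poly: "poly (root_poly I z) t = (\<Prod>i\<in>I. t - z i)"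
  unfolding root_poly_def poly_prod by simp

lemma poly_root_poly_root: "finite I \<Longrightarrow> i \<in> I \<Longrightarrow> poly (root_poly I z) (z i) = 0"
  unfolding poly_root_poly by (auto simp: prod_zero_iff)

lemma degree_root_poly: "finite I \<Longrightarrow> degree (root_poly I z) = card I"
  unfolding root_poly_def by (subst degree_prod_eq_sum_degree) auto

lemma coeff_root_poly_top: "coeff (root_poly I z) (card I) = 1"
proof (cases "finite I")
  case True
  then show ?thesis using lead_coeff_prod[of "\<lambda>i. [:-z i, 1:]" I] degree_root_poly[OF True, of z]
    unfolding root_poly_def by simp
qed (simp add: root_poly_def)

lemma root_poly_nonzero: "root_poly I z \<noteq> 0"
  using coeff_root_poly_top[of I z] by auto

lemma monom_geom_split: "monom 1 j = [:-a, 1:] * geom_quot a j + [:a ^ j:]"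
proof -
  have "poly (monom 1 j) t = poly ([:-a, 1:] * geom_quot a j + [:a ^ j:]) t" for t
    using power_diff_sumr2[of t j a]
    by (simp add: geom_quot_def poly_sum poly_monom algebra_simps)
  thus ?thesis using poly_eq_poly_eq_iff by blast
qed

lemma monom_pderiv_division:
  assumes "finite I"
  shows "monom 1 j * pderiv (root_poly I z) = root_poly I z * newton_quot I z j + newton_rem I z j"
proof -
  let ?R = "\<lambda>i. \<Prod>l\<in>I-{i}. [:-z l, 1:]"
  have deriv: "pderiv (root_poly I z) = (\<Sum>i\<in>I. ?R i)"
    unfolding root_poly_def pderiv_prod by (simp add: pderiv_pCons)
  have summand: "monom 1 j * ?R i = root_poly I z * geom_quot (z i) j + smult (z i ^ j) (?R i)"
    if "i \<in> I" for i
  proof -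
    have Q: "root_poly I z = [:-z i, 1:] * ?R i"
      unfolding root_poly_def using assms that by (simp add: prod.remove)
    have "monom 1 j * ?R i = ([:-z i, 1:] * geom_quot (z i) j + [:z i ^ j:]) * ?R i"
      using monom_geom_split by metis
    also have "\<dots> = ([:-z i, 1:] * ?R i) * geom_quot (z i) j + smult (z i ^ j) (?R i)"
      by (simp add: algebra_simps)
    finally show ?thesis unfolding Q .
  qed
  show ?thesis unfolding deriv sum_distrib_left newton_quot_def newton_rem_def
    using summand by (simp add: sum.distrib sum_distrib_left)
qed

lemma degree_geom_quot: "degree (geom_quot a j) \<le> j - 1"
  unfolding geom_quot_def
proof (rule degree_sum_le)
  show "degree (monom (a ^ (j - Suc m)) m) \<le> j - 1" if "m \<in> {..<j}" for m
    using that degree_monom_le[of "a ^ (j - Suc m)" m] by simp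
qed simp

lemma degree_newton_quot: "finite I \<Longrightarrow> degree (newton_quot I z j) \<le> j - 1"
  unfolding newton_quot_def by (intro degree_sum_le) (use degree_geom_quot in auto)

lemma degree_newton_rem:
  assumes "finite I"
  shows "degree (newton_rem I z j) \<le> card I - 1"
proof -
  have "degree (smult (z i ^ j) (\<Prod>l\<in>I-{i}. [:-z l, 1:])) \<le> card I - 1" if "i \<in> I" for i
  proof -
    have "degree (\<Prod>l\<in>I-{i}. [:-z l, 1:]) \<le> (\<Sum>l\<in>I-{i}. degree [:-z l, 1:])"
      using degree_prod_sum_le[of "I-{i}" "\<lambda>l. [:-z l, 1:]"] assms by (simp add: o_def)
    also have "\<dots> = card I - 1" using assms that by simp
    finally show ?thesis using degree_smult_le order_trans by blast
  qed
  thus ?thesis unfolding newton_rem_def using assms by (intro degree_sum_le) auto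
qed

text \<open>If two root polynomials differ by a constant, the Newton quotients of order
  j \<le> card I agree: both are the polynomial part of X^j * Q' / Q, as Q' is shared.\<close>
lemma newton_quot_shift_invariant:
  assumes f: "finite I" and shift: "root_poly I y = root_poly I x + [:c:]"
    and j: "1 \<le> j" "j \<le> card I"
  shows "newton_quot I y j = newton_quot I x j"
proof (rule ccontr)
  assume ne: "newton_quot I y j \<noteq> newton_quot I x j"
  have "monom 1 j * pderiv (root_poly I x) = (root_poly I x + [:c:]) * newton_quot I y j + newton_rem I y j"
    using monom_pderiv_division[OF f, of j y] unfolding shift by (simp add: pderiv_add pderiv_pCons)
  hence eq: "root_poly I x * (newton_quot I y j - newton_quot I x j)
      = newton_rem I x j - newton_rem I y j - smult c (newton_quot I y j)"
    using monom_pderiv_division[OF f, of j x] by (simp add: algebra_simps)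
  have "card I \<le> degree (root_poly I x * (newton_quot I y j - newton_quot I x j))"
    using ne root_poly_nonzero degree_root_poly[OF f] by (simp add: degree_mult_eq)
  moreover have "degree (newton_rem I x j - newton_rem I y j - smult c (newton_quot I y j)) < card I"
  proof -
    have "degree (newton_rem I x j) < card I" "degree (newton_rem I y j) < card I"
      "degree (smult c (newton_quot I y j)) < card I"
      using degree_newton_rem[OF f, of x j] degree_newton_rem[OF f, of y j]
        degree_newton_quot[OF f, of y j] degree_smult_le[of c "newton_quot I y j"] j
      by linarith+
    thus ?thesis using degree_diff_le_max le_less_trans max_less_iff_conj by metis
  qed
  ultimately show False using eq by simp
qed

lemma coeff0_geom_quot: "coeff (geom_quot a (Suc j)) 0 = a ^ j"
  unfolding geom_quot_def coeff_sum coeff_monom by (simp add: sum.delta)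

lemma coeff0_newton_quot: "coeff (newton_quot I z (Suc j)) 0 = (\<Sum>i\<in>I. z i ^ j)"
  unfolding newton_quot_def coeff_sum coeff0_geom_quot ..


lemma power_sums_shift_low:
  assumes "finite I" "root_poly I y = root_poly I x + [:c:]" "j < card I"
  shows "(\<Sum>i\<in>I. y i ^ j) = (\<Sum>i\<in>I. x i ^ j)"
proof -
  have "newton_quot I y (Suc j) = newton_quot I x (Suc j)"
    using newton_quot_shift_invariant[OF assms(1,2), of "Suc j"] assms(3) by simp
  then show ?thesis by (metis coeff0_newton_quot)
qed

text \<open>Summing Q(z i) = 0 over the roots: a linear relation among the power sums.\<close>
lemma root_poly_power_sum_relation:
  assumes "finite I"
  shows "(\<Sum>l\<le>card I. coeff (root_poly I z) l * (\<Sum>i\<in>I. z i ^ l)) = 0"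
proof -
  have "(\<Sum>i\<in>I. poly (root_poly I z) (z i)) = 0"
    using poly_root_poly_root[OF assms] by simp
  thus ?thesis unfolding poly_altdef degree_root_poly[OF assms]
    by (simp add: sum_distrib_left sum.swap[of _ I] mult.commute)
qed

lemma power_sum_shift_top:
  assumes f: "finite I" and shift: "root_poly I y = root_poly I x + [:c:]" and K: "I \<noteq> {}"
  shows "(\<Sum>i\<in>I. y i ^ card I) = (\<Sum>i\<in>I. x i ^ card I) - real (card I) * c"
proof -
  let ?K = "card I"
  have "0 < ?K" using f K card_gt_0_iff by blast
  have coeffs: "coeff (root_poly I y) l = coeff (root_poly I x) l + (if l = 0 then c else 0)" for l
    unfolding shift by (cases l) auto
  have split: "(\<Sum>l\<le>?K. g l) = (\<Sum>l<?K. g l) + g ?K" for g :: "nat \<Rightarrow> real"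
    by (simp add: lessThan_Suc_atMost[symmetric])
  have "(\<Sum>l<?K. coeff (root_poly I y) l * (\<Sum>i\<in>I. y i ^ l))
      = (\<Sum>l<?K. coeff (root_poly I x) l * (\<Sum>i\<in>I. x i ^ l) + (if l = 0 then c * real ?K else 0))"
    using power_sums_shift_low[OF f shift] by (intro sum.cong) (auto simp: coeffs algebra_simps)
  also have "\<dots> = (\<Sum>l<?K. coeff (root_poly I x) l * (\<Sum>i\<in>I. x i ^ l)) + c * real ?K"
    using \<open>0 < ?K\<close> by (simp add: sum.distrib)
  finally show ?thesis
    using root_poly_power_sum_relation[OF f, of y] root_poly_power_sum_relation[OF f, of x]
    unfolding split coeff_root_poly_top by (simp add: algebra_simps)
qed

text \<open>Monic polynomials of degree card I with card I common roots coincide.\<close>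
lemma root_poly_shift_eq:
  assumes f: "finite I" and inj: "inj_on y I" and K: "I \<noteq> {}"
    and roots: "\<forall>i\<in>I. poly (root_poly I x) (y i) + c = 0"
  shows "root_poly I y = root_poly I x + [:c:]"
proof (rule poly_eqI_degree_lead_coeff[where A = "y ` I" and n = "card I"])
  have "0 < card I" using f K card_gt_0_iff by blast
  thus "coeff (root_poly I y) (card I) = coeff (root_poly I x + [:c:]) (card I)"
    using coeff_root_poly_top[of I] by (cases "card I") auto
  show "card I \<le> card (y ` I)" using card_image[OF inj] by simp
  show "degree (root_poly I y) \<le> card I" using degree_root_poly[OF f] by simp
  show "degree (root_poly I x + [:c:]) \<le> card I"
    using degree_root_poly[OF f, of x] \<open>0 < card I\<close> by (intro degree_add_le) auto
  show "poly (root_poly I y) z = poly (root_poly I x + [:c:]) z" if "z \<in> y ` I" for z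
    using that poly_root_poly_root[OF f] roots by auto
qed

section \<open>Perturbing the roots of a sorted point\<close>

lemma sorted_mono:
  fixes x :: "nat \<Rightarrow> real"
  assumes sorted: "\<forall>i\<in>{1..<k}. x (Suc i) \<le> x i" and "1 \<le> i" "i \<le> l" "l \<le> k"
  shows "x l \<le> x i"
  using assms(3,4)
proof (induction l rule: dec_induct)
  case (step n)
  hence "x (Suc n) \<le> x n" using sorted \<open>1 \<le> i\<close> by auto
  thus ?case using step by simp
qed simp

lemma strict_sorted_mono:
  fixes y :: "nat \<Rightarrow> real"
  assumes sorted: "\<forall>i\<in>{1..<k}. y (Suc i) < y i" and i: "1 \<le> i" "i < l" "l \<le> k"
  shows "y l < y i"
proof -
  have "\<forall>i\<in>{1..<k}. y (Suc i) \<le> y i" using sorted by (simp add: less_imp_le)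
  hence "y l \<le> y (Suc i)" using i by (intro sorted_mono) auto
  also have "y (Suc i) < y i" using sorted i by auto
  finally show ?thesis .
qed

lemma strict_sorted_inj:
  fixes y :: "nat \<Rightarrow> real"
  assumes "\<forall>i\<in>{1..<k}. y (Suc i) < y i"
  shows "inj_on y {1..k}"
proof (rule inj_onI, rule ccontr)
  fix i l assume "i \<in> {1..k}" "l \<in> {1..k}" "y i = y l" "i \<noteq> l"
  then show False using strict_sorted_mono[OF assms, of i l] strict_sorted_mono[OF assms, of l i]
    by (cases "i < l") auto
qed

lemma sign_prod:
  fixes x :: "nat \<Rightarrow> real"
  assumes "m \<le> k" "\<forall>i\<in>{1..m}. t < x i" "\<forall>i\<in>{Suc m..k}. x i < t"
  shows "0 < (-1)^m * (\<Prod>i=1..k. t - x i)"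
proof -
  have split: "{1..k} = {1..m} \<union> {Suc m..k}" using assms(1) by auto
  have "(\<Prod>i=1..k. t - x i) = (\<Prod>i=1..m. t - x i) * (\<Prod>i=Suc m..k. t - x i)"
    unfolding split by (rule prod.union_disjoint) auto
  moreover have "(-1)^m * (\<Prod>i=1..m. t - x i) = (\<Prod>i=1..m. x i - t)"
  proof -
    have "(\<Prod>i=1..m. x i - t) = (\<Prod>i=1..m. (-1) * (t - x i))" by simp
    also have "\<dots> = (-1)^m * (\<Prod>i=1..m. t - x i)" by (simp only: prod.distrib prod_constant) simp
    finally show ?thesis by simp
  qed
  moreover have "0 < (\<Prod>i=1..m. x i - t)" "0 < (\<Prod>i=Suc m..k. t - x i)"
    using assms(2,3) by (auto intro: prod_pos)
  ultimately show ?thesis by (metis mult.assoc mult_pos_pos)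
qed

lemma finite_pos_lb:
  fixes V :: "real set"
  assumes "finite V" "\<forall>v\<in>V. 0 < v"
  shows "\<exists>\<mu>>0. \<forall>v\<in>V. \<mu> \<le> v"
  using assms by (intro exI[of _ "Min (insert 1 V)"]) (auto simp: Min_gr_iff)

lemma exists_separation:
  fixes x :: "nat \<Rightarrow> real"
  assumes "0 < e"
  shows "\<exists>\<delta>>0. \<delta> \<le> e \<and> (\<forall>l\<in>{1..<k}. x l \<noteq> x (Suc l) \<longrightarrow> 2 * \<delta> \<le> \<bar>x l - x (Suc l)\<bar>)"
proof -
  obtain \<Delta> where "0 < \<Delta>" and \<Delta>: "\<forall>l\<in>{1..<k}. x l \<noteq> x (Suc l) \<longrightarrow> \<Delta> \<le> \<bar>x l - x (Suc l)\<bar>"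
    using finite_pos_lb[of "(\<lambda>l. \<bar>x l - x (Suc l)\<bar>) ` {l\<in>{1..<k}. x l \<noteq> x (Suc l)}"] by force
  show ?thesis
    using \<open>0 < \<Delta>\<close> \<open>0 < e\<close> \<Delta> by (intro exI[of _ "min (\<Delta>/2) e"]) auto
qed

text \<open>Each root x_l of P is bracketed by [lo l, hi l]:
  the bracket extends by \<delta> on each side, except towards a tied neighbour.\<close>
locale separated_point =
  fixes k :: nat and x :: "nat \<Rightarrow> real" and \<delta> :: real
  assumes sorted: "\<forall>i\<in>{1..<k}. x (Suc i) \<le> x i"
    and \<delta>_pos: "0 < \<delta>"
    and gap: "\<forall>l\<in>{1..<k}. x l \<noteq> x (Suc l) \<longrightarrow> 2 * \<delta> \<le> x l - x (Suc l)"
begin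

definition P :: "real \<Rightarrow> real" where
  "P t = (\<Prod>i=1..k. t - x i)"

definition lo :: "nat \<Rightarrow> real" where
  "lo l = (if l < k \<and> x l = x (Suc l) then x l else x l - \<delta>)"

definition hi :: "nat \<Rightarrow> real" where
  "hi l = (if 1 < l \<and> x (l-1) = x l then x l else x l + \<delta>)"

lemma P_root: "l \<in> {1..k} \<Longrightarrow> P (x l) = 0"
  unfolding P_def by (auto simp: prod_zero_iff)

lemma bracket_near: "x l - \<delta> \<le> lo l" "lo l \<le> x l" "x l \<le> hi l" "hi l \<le> x l + \<delta>"
  using \<delta>_pos by (auto simp: lo_def hi_def)

lemma hi_le_lo: "l \<in> {1..<k} \<Longrightarrow> hi (Suc l) \<le> lo l"
  using gap \<delta>_pos by (auto simp: lo_def hi_def)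

text \<open>Below an untied root x_l exactly l roots exceed the point x_l - \<delta>.\<close>
lemma P_below:
  assumes l: "l \<in> {1..k}" and untied: "\<not> (l < k \<and> x l = x (Suc l))"
  shows "0 < (-1)^l * P (x l - \<delta>)"
  unfolding P_def
proof (rule sign_prod)
  show "\<forall>i\<in>{1..l}. x l - \<delta> < x i" using sorted_mono[OF sorted] l \<delta>_pos by force
  show "\<forall>i\<in>{Suc l..k}. x i < x l - \<delta>"
  proof
    fix i assume i: "i \<in> {Suc l..k}"
    hence "2 * \<delta> \<le> x l - x (Suc l)" using untied gap l by auto
    moreover have "x i \<le> x (Suc l)" using sorted_mono[OF sorted, of "Suc l" i] i by auto
    ultimately show "x i < x l - \<delta>" using \<delta>_pos by linarith
  qed
qed (use l in auto)

text \<open>Above an untied root x_l exactly l - 1 roots exceed the point x_l + \<delta>.\<close>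
lemma P_above:
  assumes l: "l \<in> {1..k}" and untied: "\<not> (1 < l \<and> x (l-1) = x l)"
  shows "0 < (-1)^(l-1) * P (x l + \<delta>)"
  unfolding P_def
proof (rule sign_prod)
  show "\<forall>i\<in>{Suc (l-1)..k}. x i < x l + \<delta>"
    using sorted_mono[OF sorted, of l] l \<delta>_pos by force
  show "\<forall>i\<in>{1..l-1}. x l + \<delta> < x i"
  proof
    fix i assume i: "i \<in> {1..l-1}"
    hence "l - 1 \<in> {1..<k}" "Suc (l-1) = l" using l by auto
    hence "2 * \<delta> \<le> x (l-1) - x l" using untied gap i by fastforce
    moreover have "x (l-1) \<le> x i" using sorted_mono[OF sorted, of i "l-1"] i l by auto
    ultimately show "x l + \<delta> < x i" using \<delta>_pos by linarith
  qed
qed (use l in auto)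

lemma bracket_end_bound:
  "\<exists>\<mu>>0. \<forall>l\<in>{1..k}. (\<not> (l < k \<and> x l = x (Suc l)) \<longrightarrow> \<mu> \<le> (-1)^l * P (x l - \<delta>))
                    \<and> (\<not> (1 < l \<and> x (l-1) = x l) \<longrightarrow> \<mu> \<le> (-1)^(l-1) * P (x l + \<delta>))"
proof -
  let ?V = "(\<lambda>l. (-1)^l * P (x l - \<delta>)) ` {l\<in>{1..k}. \<not> (l < k \<and> x l = x (Suc l))}
          \<union> (\<lambda>l. (-1)^(l-1) * P (x l + \<delta>)) ` {l\<in>{1..k}. \<not> (1 < l \<and> x (l-1) = x l)}"
  have "\<forall>v\<in>?V. 0 < v" using P_below P_above by auto
  then obtain \<mu> where "0 < \<mu>" "\<forall>v\<in>?V. \<mu> \<le> v" using finite_pos_lb[of ?V] by auto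
  then show ?thesis by (intro exI[of _ \<mu>]) auto
qed

text \<open>The shifted polynomial P + c has the sign (-1)^l at the lower end of the l-th
  bracket: at an untied end because c is small, at a tied end (a root of P)
  because of the sign of c.\<close>
lemma lo_sign:
  assumes l: "l \<in> {1..k}" and bound: "\<not> (l < k \<and> x l = x (Suc l)) \<longrightarrow> \<mu> \<le> (-1)^l * P (x l - \<delta>)"
    and c: "\<bar>c\<bar> < \<mu>" and tie: "l < k \<and> x l = x (Suc l) \<longrightarrow> 0 < (-1)^l * c"
  shows "0 < (-1)^l * (P (lo l) + c)"
proof (cases "l < k \<and> x l = x (Suc l)")
  case True
  then show ?thesis using tie P_root[OF l] by (simp add: lo_def)
next
  case False
  have small: "-\<bar>c\<bar> \<le> (-1)^l * c" using abs_ge_minus_self[of "(-1)^l * c"] by (simp add: abs_mult power_abs)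
  have lo: "lo l = x l - \<delta>" unfolding lo_def by (rule if_not_P[OF False])
  have "(-1)^l * (P (lo l) + c) = (-1)^l * P (x l - \<delta>) + (-1)^l * c"
    unfolding lo by (simp add: algebra_simps)
  with small False bound c show ?thesis by linarith
qed

lemma hi_sign:
  assumes l: "l \<in> {1..k}" and bound: "\<not> (1 < l \<and> x (l-1) = x l) \<longrightarrow> \<mu> \<le> (-1)^(l-1) * P (x l + \<delta>)"
    and c: "\<bar>c\<bar> < \<mu>" and tie: "1 < l \<and> x (l-1) = x l \<longrightarrow> (-1)^l * c < 0"
  shows "(-1)^l * (P (hi l) + c) < 0"
proof (cases "1 < l \<and> x (l-1) = x l")
  case True
  then show ?thesis using tie P_root[OF l] by (simp add: hi_def)
next
  case False
  have small: "(-1)^l * c \<le> \<bar>c\<bar>" using abs_ge_self[of "(-1)^l * c"] by (simp add: abs_mult power_abs)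
  have "(-1)^l = - ((-1)^(l-1) :: real)" using l by (cases l) auto
  moreover have "hi l = x l + \<delta>" unfolding hi_def by (rule if_not_P[OF False])
  ultimately have "(-1)^l * (P (hi l) + c) = - ((-1)^(l-1) * P (x l + \<delta>)) + (-1)^l * c"
    by (simp add: algebra_simps)
  with small False bound c show ?thesis by linarith
qed

text \<open>Intermediate value theorem on the l-th bracket.\<close>
lemma bracket_root:
  assumes l: "l \<in> {1..k}" and lo: "0 < (-1)^l * (P (lo l) + c)" and hi: "(-1)^l * (P (hi l) + c) < 0"
  shows "\<exists>r. lo l < r \<and> r < hi l \<and> P r + c = 0"
proof -
  define g where "g t = (-1)^l * (P t + c)" for t
  have "continuous_on {lo l..hi l} g" unfolding g_def P_def by (intro continuous_intros)
  moreover have "lo l \<le> hi l" using bracket_near order_trans by metis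
  ultimately obtain r where r: "lo l \<le> r" "r \<le> hi l" "g r = 0"
    using IVT2'[of g "hi l" 0 "lo l"] lo hi unfolding g_def by force
  have "r \<noteq> lo l" "r \<noteq> hi l" using r(3) lo hi unfolding g_def by auto
  with r show ?thesis unfolding g_def by force
qed

lemma small_shift_roots:
  "\<exists>c\<^sub>0>0. \<forall>c. \<bar>c\<bar> < c\<^sub>0 \<longrightarrow> (\<forall>l\<in>{1..<k}. x l = x (Suc l) \<longrightarrow> 0 < (-1)^l * c) \<longrightarrow>
     (\<exists>y. (\<forall>l\<in>{1..<k}. y (Suc l) < y l) \<and> (\<forall>l\<in>{1..k}. \<bar>y l - x l\<bar> < \<delta> \<and> P (y l) + c = 0))"
proof -
  obtain \<mu> where "0 < \<mu>" and \<mu>: "\<forall>l\<in>{1..k}. (\<not> (l < k \<and> x l = x (Suc l)) \<longrightarrow> \<mu> \<le> (-1)^l * P (x l - \<delta>))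
                    \<and> (\<not> (1 < l \<and> x (l-1) = x l) \<longrightarrow> \<mu> \<le> (-1)^(l-1) * P (x l + \<delta>))"
    using bracket_end_bound by blast
  have "\<exists>y. (\<forall>l\<in>{1..<k}. y (Suc l) < y l) \<and> (\<forall>l\<in>{1..k}. \<bar>y l - x l\<bar> < \<delta> \<and> P (y l) + c = 0)"
    if c: "\<bar>c\<bar> < \<mu>" and ties: "\<forall>l\<in>{1..<k}. x l = x (Suc l) \<longrightarrow> 0 < (-1)^l * c" for c
  proof -
    have upper_tie: "1 < l \<and> x (l-1) = x l \<longrightarrow> (-1)^l * c < 0" if "l \<in> {1..k}" for l
    proof
      assume tie: "1 < l \<and> x (l-1) = x l"
      then have "0 < (-1)^(l-1) * c" using ties that by (cases l) auto
      moreover have "(-1)^l = - ((-1)^(l-1) :: real)" using tie by (cases l) auto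
      ultimately show "(-1)^l * c < 0" by simp
    qed
    have "\<forall>l\<in>{1..k}. \<exists>r. lo l < r \<and> r < hi l \<and> P r + c = 0"
    proof
      fix l assume l: "l \<in> {1..k}"
      show "\<exists>r. lo l < r \<and> r < hi l \<and> P r + c = 0"
        using bracket_root[OF l lo_sign[OF l _ c] hi_sign[OF l _ c]] \<mu> ties upper_tie[OF l] l by auto
    qed
    then obtain y where y: "\<forall>l\<in>{1..k}. lo l < y l \<and> y l < hi l \<and> P (y l) + c = 0"
      by metis
    have "y (Suc l) < y l" if l: "l \<in> {1..<k}" for l
    proof -
      have "y (Suc l) < hi (Suc l)" "lo l < y l" using y l by auto
      then show ?thesis using hi_le_lo[OF l] by linarith
    qed
    moreover have "\<bar>y l - x l\<bar> < \<delta>" if "l \<in> {1..k}" for l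
      using y bracket_near[of l] that by fastforce
    ultimately show ?thesis using y by blast
  qed
  with \<open>0 < \<mu>\<close> show ?thesis by blast
qed

end

section \<open>Local extrema of the k-th power sum on S_k\<close>

lemma distn_less:
  assumes "0 < n" "\<forall>i\<in>{1..n}. \<bar>y i - x i\<bar> < e / real n"
  shows "distn n y x < e"
proof -
  have "distn n y x = L2_set (\<lambda>i. y i - x i) {1..n}" by (simp add: distn_def L2_set_def)
  also have "\<dots> \<le> (\<Sum>i=1..n. \<bar>y i - x i\<bar>)" by (rule L2_set_le_sum_abs)
  also have "\<dots> < (\<Sum>i=1..n. e / real n)" using assms by (intro sum_strict_mono) auto
  also have "\<dots> = e" using assms by simp
  finally show ?thesis .
qed

lemma better_point:
  fixes x :: "nat \<Rightarrow> real" and \<sigma> :: real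
  assumes k: "1 \<le> k" and xS: "x \<in> Sk k k s" and e: "0 < e" and \<sigma>: "\<sigma> = 1 \<or> \<sigma> = -1"
    and ties: "\<forall>l\<in>{1..<k}. x l = x (Suc l) \<longrightarrow> 0 < (-1)^l * \<sigma>"
  shows "\<exists>y\<in>Sk k k s. distn k y x < e \<and> \<sigma> * (\<Sum>i=1..k. y i ^ k) < \<sigma> * (\<Sum>i=1..k. x i ^ k)"
proof -
  have sorted: "\<forall>i\<in>{1..<k}. x (Suc i) \<le> x i" and psums: "\<forall>j\<in>{1..k-1}. (\<Sum>i=1..k. x i ^ j) = s j"
    using xS unfolding Sk_def by auto
  obtain \<delta> where "0 < \<delta>" "\<delta> \<le> e / real k"
    and gap: "\<forall>l\<in>{1..<k}. x l \<noteq> x (Suc l) \<longrightarrow> 2 * \<delta> \<le> \<bar>x l - x (Suc l)\<bar>"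
    using exists_separation[where e = "e / real k" and x = x and k = k] e k by auto
  interpret separated_point k x \<delta>
    using sorted \<open>0 < \<delta>\<close> gap by unfold_locales auto
  obtain c\<^sub>0 where "0 < c\<^sub>0" and roots: "\<forall>c. \<bar>c\<bar> < c\<^sub>0 \<longrightarrow> (\<forall>l\<in>{1..<k}. x l = x (Suc l) \<longrightarrow> 0 < (-1)^l * c) \<longrightarrow>
     (\<exists>y. (\<forall>l\<in>{1..<k}. y (Suc l) < y l) \<and> (\<forall>l\<in>{1..k}. \<bar>y l - x l\<bar> < \<delta> \<and> P (y l) + c = 0))"
    using small_shift_roots by blast
  define c where "c = \<sigma> * c\<^sub>0 / 2"
  have "\<bar>c\<bar> < c\<^sub>0" and "0 < \<sigma> * c" using \<sigma> \<open>0 < c\<^sub>0\<close> by (auto simp: c_def)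
  moreover have "0 < (-1)^l * c" if "l \<in> {1..<k}" "x l = x (Suc l)" for l
    using ties that \<open>0 < c\<^sub>0\<close> mult_pos_pos[of "(-1)^l * \<sigma>" "c\<^sub>0 / 2"] by (simp add: c_def mult.assoc)
  ultimately obtain y where y_sorted: "\<forall>l\<in>{1..<k}. y (Suc l) < y l"
    and y_roots: "\<forall>l\<in>{1..k}. \<bar>y l - x l\<bar> < \<delta> \<and> P (y l) + c = 0"
    using roots by blast
  have shift: "root_poly {1..k} y = root_poly {1..k} x + [:c:]"
    using root_poly_shift_eq[of "{1..k}" y x c] strict_sorted_inj[OF y_sorted] y_roots k
    by (auto simp: poly_root_poly P_def)
  have "y \<in> Sk k k s"
    using y_sorted psums power_sums_shift_low[OF _ shift] unfolding Sk_def by (auto simp: less_imp_le)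
  moreover have "distn k y x < e"
    using y_roots \<open>\<delta> \<le> e / real k\<close> k by (intro distn_less) force+
  moreover have "(\<Sum>i=1..k. y i ^ k) = (\<Sum>i=1..k. x i ^ k) - real k * c"
    using power_sum_shift_top[OF _ shift] k by simp
  hence "\<sigma> * (\<Sum>i=1..k. y i ^ k) = \<sigma> * (\<Sum>i=1..k. x i ^ k) - real k * (\<sigma> * c)"
    by (simp only: right_diff_distrib mult.left_commute)
  hence "\<sigma> * (\<Sum>i=1..k. y i ^ k) < \<sigma> * (\<Sum>i=1..k. x i ^ k)"
    using \<open>0 < \<sigma> * c\<close> k by simp
  ultimately show ?thesis by blast
qed

text \<open>At a local maximum of the k-th power sum some tie x_l = x_(l+1) sits at an even
  position l: otherwise better_point with \<sigma> = -1 yields a nearby larger value.\<close>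
lemma local_max_even_tie:
  assumes k: "1 \<le> k" and max: "local_max_on k (Sk k k s) (\<lambda>y. \<Sum>i=1..k. y i ^ k) x"
  shows "\<exists>l\<in>{1..<k}. even l \<and> x l = x (Suc l)"
proof (rule ccontr)
  obtain e where xS: "x \<in> Sk k k s" and "0 < e"
    and le: "\<forall>y\<in>Sk k k s. distn k y x < e \<longrightarrow> (\<Sum>i=1..k. y i ^ k) \<le> (\<Sum>i=1..k. x i ^ k)"
    using max unfolding local_max_on_def by auto
  assume "\<not> ?thesis"
  then have "\<forall>l\<in>{1..<k}. x l = x (Suc l) \<longrightarrow> 0 < (-1)^l * (-1::real)" by auto
  then obtain y where "y \<in> Sk k k s" "distn k y x < e"
    and "-1 * (\<Sum>i=1..k. y i ^ k) < -1 * (\<Sum>i=1..k. x i ^ k)"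
    using better_point[OF k xS \<open>0 < e\<close>, of "-1"] by auto
  with le show False by auto
qed

text \<open>Dually, at a local minimum some tie sits at an odd position (\<sigma> = 1).\<close>
lemma local_min_odd_tie:
  assumes k: "1 \<le> k" and min: "local_min_on k (Sk k k s) (\<lambda>y. \<Sum>i=1..k. y i ^ k) x"
  shows "\<exists>l\<in>{1..<k}. odd l \<and> x l = x (Suc l)"
proof (rule ccontr)
  obtain e where xS: "x \<in> Sk k k s" and "0 < e"
    and ge: "\<forall>y\<in>Sk k k s. distn k y x < e \<longrightarrow> (\<Sum>i=1..k. x i ^ k) \<le> (\<Sum>i=1..k. y i ^ k)"
    using min unfolding local_min_on_def by auto
  assume "\<not> ?thesis"
  then have "\<forall>l\<in>{1..<k}. x l = x (Suc l) \<longrightarrow> 0 < (-1)^l * (1::real)" by auto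
  then obtain y where "y \<in> Sk k k s" "distn k y x < e"
    and "1 * (\<Sum>i=1..k. y i ^ k) < 1 * (\<Sum>i=1..k. x i ^ k)"
    using better_point[OF k xS \<open>0 < e\<close>, of 1] by auto
  with ge show False by auto
qed

theorem mainTheorem13:
  fixes k :: nat and s :: "nat \<Rightarrow> real" and x :: "nat \<Rightarrow> real"
  assumes "k \<ge> 3"
  shows "(local_max_on k (Sk k k s) (\<lambda>y. \<Sum>i=1..k. y i ^ k) x \<longrightarrow>
            (\<exists>i::nat. 1 \<le> 2*i \<and> 2*i+1 \<le> k \<and> x (2*i) = x (2*i+1)))
       \<and> (local_min_on k (Sk k k s) (\<lambda>y. \<Sum>i=1..k. y i ^ k) x \<longrightarrow>
            (\<exists>i::nat. 1 \<le> i \<and> 2*i \<le> k \<and> x (2*i-1) = x (2*i)))"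
proof (intro conjI impI)
  have k: "1 \<le> k" using assms by simp
  assume "local_max_on k (Sk k k s) (\<lambda>y. \<Sum>i=1..k. y i ^ k) x"
  then obtain l where l: "l \<in> {1..<k}" "even l" "x l = x (Suc l)"
    using local_max_even_tie[OF k] by blast
  then obtain i where "l = 2*i" by (elim evenE)
  with l show "\<exists>i::nat. 1 \<le> 2*i \<and> 2*i+1 \<le> k \<and> x (2*i) = x (2*i+1)" by auto
next
  have k: "1 \<le> k" using assms by simp
  assume "local_min_on k (Sk k k s) (\<lambda>y. \<Sum>i=1..k. y i ^ k) x"
  then obtain l where l: "l \<in> {1..<k}" "odd l" "x l = x (Suc l)"
    using local_min_odd_tie[OF k] by blast
  then obtain i where "l = 2*i + 1" by (elim oddE)
  with l have "1 \<le> Suc i \<and> 2 * Suc i \<le> k \<and> x (2 * Suc i - 1) = x (2 * Suc i)" by auto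
  then show "\<exists>i::nat. 1 \<le> i \<and> 2*i \<le> k \<and> x (2*i-1) = x (2*i)" by blast
qed

end
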